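(* Let $C$ be a Plotkin-optimal projective linear code over $\mathbb{Z}_4$ of type $4^{k_1}2^{k_2}$, length $n$ and minimum Lee distance $n$, with exactly two nonzero Lee weights $m$ and $n$. Let $a,b$ be nonnegative integers, not both zero. Then there exists a Plotkin-optimal projective linear code $C'$ over $\mathbb{Z}_4$ of type $4^{k_1+a}2^{k_2+b}$, length $4^a2^bn$ and minimum Lee distance $4^a2^bn$, with exactly two nonzero Lee weights $w_1=4^a2^bm$ and $w_2=4^a2^bn$, such that $A_{w_1}(C')=A_m(C)$ and $A_{w_2}(C')=4^{k_1+a}2^{k_2+b}-1-A_m(C)$.
   Context: A linear code of length $n$ over $\mathbb{Z}_4$ is a $\mathbb{Z}_4$-submodule of $\mathbb{Z}_4^n$, of type $4^{k_1}2^{k_2}$ if isomorphic to $\mathbb{Z}_4^{k_1}\times\mathbb{Z}_2^{k_2}$. Lee weight: $w_L(0)=0,w_L(1)=1,w_L(2)=2,w_L(3)=1$, additive on vectors; minimum Lee distance is the minimum nonzero Lee weight. Plotkin-optimal means $d_L=\lfloor\frac{|C|}{|C|-1}\cdot\text{length}\rfloor$; projective means the dual (with respect to $\sum x_iy_i\in\mathbb{Z}_4$) has minimum Lee distance at least $3$. $A_w(D)$ is the number of codewords of $D$ of Lee weight $w$. *)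

theory Defs
  imports Complex_Main
begin

text \<open>Elements of Z4 are represented by the integers 0,1,2,3; elements of Z2 by 0,1.
  Vectors of length n are integer lists of length n with entries in the range.\<close>

definition zvecs :: "int \<Rightarrow> nat \<Rightarrow> int list set" where
  "zvecs q n = {xs. length xs = n \<and> set xs \<subseteq> {0..q-1}}"

abbreviation z4vecs :: "nat \<Rightarrow> int list set" where "z4vecs \<equiv> zvecs 4"
abbreviation z2vecs :: "nat \<Rightarrow> int list set" where "z2vecs \<equiv> zvecs 2"

definition vadd :: "int \<Rightarrow> int list \<Rightarrow> int list \<Rightarrow> int list" where
  "vadd q xs ys = map2 (\<lambda>x y. (x + y) mod q) xs ys"

definition vsmult :: "int \<Rightarrow> int \<Rightarrow> int list \<Rightarrow> int list" where
  "vsmult q c xs = map (\<lambda>x. (c * x) mod q) xs"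

definition z4_linear_code :: "nat \<Rightarrow> int list set \<Rightarrow> bool" where
  "z4_linear_code n C \<longleftrightarrow> C \<subseteq> z4vecs n \<and> replicate n 0 \<in> C \<and>
     (\<forall>x\<in>C. \<forall>y\<in>C. vadd 4 x y \<in> C) \<and>
     (\<forall>c\<in>{0..3}. \<forall>x\<in>C. vsmult 4 c x \<in> C)"

text \<open>C is of type 4^k1 2^k2: C is isomorphic (as an additive group, equivalently as a
  Z4-module) to Z4^k1 x Z2^k2.\<close>
definition code_type :: "int list set \<Rightarrow> nat \<Rightarrow> nat \<Rightarrow> bool" where
  "code_type C k1 k2 \<longleftrightarrow> (\<exists>f. bij_betw f C (z4vecs k1 \<times> z2vecs k2) \<and>
     (\<forall>x\<in>C. \<forall>y\<in>C. f (vadd 4 x y) =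
        (vadd 4 (fst (f x)) (fst (f y)), vadd 2 (snd (f x)) (snd (f y)))))"

definition lee :: "int \<Rightarrow> nat" where
  "lee x = (if x mod 4 = 0 then 0 else if x mod 4 = 2 then 2 else 1)"

definition lee_wt :: "int list \<Rightarrow> nat" where
  "lee_wt xs = sum_list (map lee xs)"

definition lee_weights :: "nat \<Rightarrow> int list set \<Rightarrow> nat set" where
  "lee_weights n C = {lee_wt c | c. c \<in> C \<and> c \<noteq> replicate n 0}"

text \<open>minimum Lee distance = minimum nonzero Lee weight\<close>
definition min_lee_dist :: "nat \<Rightarrow> int list set \<Rightarrow> nat" where
  "min_lee_dist n C = Min (lee_weights n C)"

definition plotkin_optimal :: "nat \<Rightarrow> int list set \<Rightarrow> bool" where
  "plotkin_optimal n C \<longleftrightarrow>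
     int (min_lee_dist n C) = \<lfloor>(real (card C) / (real (card C) - 1)) * real n\<rfloor>"

definition dot4 :: "int list \<Rightarrow> int list \<Rightarrow> int" where
  "dot4 xs ys = (\<Sum>(x, y)\<leftarrow>zip xs ys. x * y) mod 4"

definition dual_code :: "nat \<Rightarrow> int list set \<Rightarrow> int list set" where
  "dual_code n C = {y \<in> z4vecs n. \<forall>x\<in>C. dot4 x y = 0}"

text \<open>projective: the dual has minimum Lee distance at least 3, i.e. every nonzero dual
  codeword has Lee weight at least 3.\<close>
definition projective :: "nat \<Rightarrow> int list set \<Rightarrow> bool" where
  "projective n C \<longleftrightarrow> (\<forall>y\<in>dual_code n C. y \<noteq> replicate n 0 \<longrightarrow> lee_wt y \<ge> 3)"

definition A_w :: "nat \<Rightarrow> int list set \<Rightarrow> nat" where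
  "A_w w D = card {c \<in> D. lee_wt c = w}"

end

theory Submission
  imports Defs
begin

(*
  Fix r in {2, 4} and let T be the subgroup of Z4 killed by r (all of Z4 for r = 4, {0, 2}
  for r = 2). Replace each codeword c by the words (c, c + t, c + 2t, ..., c + (r - 1) t),
  t in T, where c + t adds t to every coordinate; this adds one generator of order r to the
  type. For t = 0 the word has Lee weight r wt(c); for t <> 0 each coordinate x runs through
  x + j t, j < r, which contributes exactly r, so the word has weight r n. Hence the weights
  become r m and r n, the words of weight r m correspond to those of weight m, and Plotkin
  optimality, which for minimum distance n means n + 2 <= |C|, is preserved.
  For projectivity, the r blocks of a dual word y of Lee weight at most 2 add up to a dual
  word of C of weight at most 2, hence to 0. So y consists of two opposite units in the same
  column of two different blocks j0 <> j1, and then y is not orthogonal to the word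
  (0, g, 2g, ..., (r - 1) g) with g = 4 / r, because 4 does not divide (j0 - j1) g.
  Iterating a times with r = 4 and b times with r = 2 gives the theorem.
*)

section \<open>Words over Z4 and their Lee weights\<close>

lemma length_zvecs: "xs \<in> zvecs q n \<Longrightarrow> length xs = n"
  by (simp add: zvecs_def)

lemma zvecs_eq_lists: "zvecs q n = {xs. set xs \<subseteq> {0..q-1} \<and> length xs = n}"
  by (auto simp: zvecs_def)

lemma finite_zvecs: "finite (zvecs q n)"
  by (simp add: zvecs_eq_lists finite_lists_length_eq)

lemma card_zvecs: "q \<ge> 0 \<Longrightarrow> card (zvecs q n) = nat q ^ n"
  by (simp add: zvecs_eq_lists card_lists_length_eq)

lemma nth_zvecs: "xs \<in> zvecs q n \<Longrightarrow> p < n \<Longrightarrow> xs ! p \<in> {0..q-1}"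
  unfolding zvecs_def using nth_mem by fastforce

lemma zvecs_snoc_iff: "xs @ [x] \<in> zvecs q (Suc n) \<longleftrightarrow> xs \<in> zvecs q n \<and> x \<in> {0..q-1}"
  by (auto simp: zvecs_def)

lemma zvecs_SucD:
  assumes "w \<in> zvecs q (Suc k)"
  shows "butlast w \<in> zvecs q k \<and> 0 \<le> last w \<and> last w \<le> q - 1 \<and> butlast w @ [last w] = w"
proof -
  have "w \<noteq> []" using assms by (auto simp: zvecs_def)
  then have "butlast w @ [last w] = w" by simp
  then show ?thesis using assms zvecs_snoc_iff[of "butlast w" "last w"] by auto
qed

lemma code_type_card: "code_type C k1 k2 \<Longrightarrow> card C = 4 ^ k1 * 2 ^ k2"
  unfolding code_type_def
  by (auto dest!: bij_betw_same_card simp: card_cartesian_product card_zvecs)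

lemma length_vadd [simp]: "length (vadd q xs ys) = min (length xs) (length ys)"
  by (simp add: vadd_def)

lemma nth_vadd: "p < length xs \<Longrightarrow> p < length ys \<Longrightarrow> vadd q xs ys ! p = (xs ! p + ys ! p) mod q"
  by (simp add: vadd_def)

lemma vadd_snoc:
  "length xs = length ys \<Longrightarrow> vadd q (xs @ [x]) (ys @ [y]) = vadd q xs ys @ [(x + y) mod q]"
  by (simp add: vadd_def)

lemma length_vsmult [simp]: "length (vsmult q k xs) = length xs"
  by (simp add: vsmult_def)

lemma nth_vsmult: "p < length xs \<Longrightarrow> vsmult q k xs ! p = (k * xs ! p) mod q"
  by (simp add: vsmult_def)

lemma dot4_conv_sum:
  "length xs = length ys \<Longrightarrow> dot4 xs ys = (\<Sum>p<length xs. xs ! p * ys ! p) mod 4"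
  by (simp add: dot4_def sum_list_sum_nth atLeast0LessThan)

lemma lee_mod [simp]: "lee (x mod 4) = lee x"
  by (simp add: lee_def)

lemma lee_eq_0_iff: "x \<in> {0..3} \<Longrightarrow> lee x = 0 \<longleftrightarrow> x = 0"
  by (auto simp: lee_def)

lemma lee_eq_1_iff: "x \<in> {0..3} \<Longrightarrow> lee x = 1 \<longleftrightarrow> x = 1 \<or> x = 3"
  by (auto simp: lee_def)

lemma lee_add_le: "lee (x + y) \<le> lee x + lee y"
proof -
  have "x mod 4 \<in> {0,1,2,3}" "y mod 4 \<in> {0,1,2,3}" by auto
  moreover have "(x + y) mod 4 = (x mod 4 + y mod 4) mod 4" by (simp add: mod_simps)
  ultimately show ?thesis unfolding lee_def by auto
qed

lemma lee_sum_le: "lee (\<Sum>j\<in>A. f j) \<le> (\<Sum>j\<in>A. lee (f j))"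
proof (induction A rule: infinite_finite_induct)
  case (insert x F)
  then show ?case using lee_add_le[of "f x" "sum f F"] by simp
qed (simp_all add: lee_def)

lemma lee_wt_conv_sum: "lee_wt xs = (\<Sum>p<length xs. lee (xs ! p))"
  by (simp add: lee_wt_def sum_list_sum_nth atLeast0LessThan)

lemma lee_wt_replicate_0 [simp]: "lee_wt (replicate n 0) = 0"
  by (simp add: lee_wt_def lee_def)

lemma lee_wt_eq_0_iff: "xs \<in> z4vecs n \<Longrightarrow> lee_wt xs = 0 \<longleftrightarrow> xs = replicate n 0"
proof -
  assume xs: "xs \<in> z4vecs n"
  then have "lee_wt xs = 0 \<longleftrightarrow> (\<forall>p<n. lee (xs ! p) = 0)"
    by (auto simp: lee_wt_conv_sum length_zvecs)
  also have "\<dots> \<longleftrightarrow> (\<forall>p<n. xs ! p = 0)"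
    using nth_zvecs[OF xs] lee_eq_0_iff by auto
  finally show ?thesis using length_zvecs[OF xs] by (auto simp: list_eq_iff_nth_eq)
qed

lemma lee_weights_eq:
  "C \<subseteq> z4vecs n \<Longrightarrow> lee_weights n C = lee_wt ` C - {0}"
  unfolding lee_weights_def using lee_wt_eq_0_iff by (auto 0 3)

lemma sum_lessThan_mult:
  fixes f :: "nat \<Rightarrow> 'a::comm_monoid_add"
  shows "(\<Sum>p<r * n. f p) = (\<Sum>j<r. \<Sum>i<n. f (j * n + i))"
proof (induction r)
  case (Suc r)
  have "(\<Sum>p<Suc r * n. f p) = (\<Sum>p<r * n. f p) + (\<Sum>p\<in>{r * n..<r * n + n}. f p)"
    by (simp add: sum.atLeastLessThan_concat[symmetric] lessThan_atLeast0 add.commute)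
  also have "(\<Sum>p\<in>{r * n..<r * n + n}. f p) = (\<Sum>i<n. f (r * n + i))"
    using sum.shift_bounds_nat_ivl[of f 0 "r * n" n] by (simp add: lessThan_atLeast0 add.commute)
  finally show ?case using Suc by simp
qed simp

lemma index_less_mult: "j < r \<Longrightarrow> i < (n::nat) \<Longrightarrow> j * n + i < r * n"
proof -
  assume "j < r" "i < n"
  then have "j * n + i < Suc j * n" by simp
  also have "\<dots> \<le> r * n" using \<open>j < r\<close> by (intro mult_le_mono1) simp
  finally show ?thesis .
qed

lemma mod_less_of_less_mult: "p < r * n \<Longrightarrow> p mod n < (n::nat)"
  by (cases "n = 0") auto

lemma mod_add_mult_mod: "(a + j * (b mod m)) mod m = (a + j * b) mod (m::int)"
  by (metis mod_add_right_eq mod_mult_right_eq)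

lemma mod_sum_cong:
  assumes "\<And>p. p \<in> A \<Longrightarrow> f p mod m = g p mod m"
  shows "sum f A mod m = sum g A mod (m::int)"
proof -
  have "sum f A mod m = (\<Sum>p\<in>A. f p mod m) mod m" by (rule mod_sum_eq[symmetric])
  also have "(\<Sum>p\<in>A. f p mod m) = (\<Sum>p\<in>A. g p mod m)" using assms by (rule sum.cong[OF refl])
  also have "(\<Sum>p\<in>A. g p mod m) mod m = sum g A mod m" by (rule mod_sum_eq)
  finally show ?thesis .
qed

section \<open>Stacking translates of a code\<close>

definition shift_set :: "nat \<Rightarrow> int set" where
  "shift_set r = {t \<in> {0..3}. int r * t mod 4 = 0}"

lemma shift_set_subset: "shift_set r \<subseteq> {0..3}"
  by (auto simp: shift_set_def)

lemma zero_in_shift_set [simp]: "0 \<in> shift_set r"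
  by (simp add: shift_set_def)

lemma shift_set_add: "t \<in> shift_set r \<Longrightarrow> u \<in> shift_set r \<Longrightarrow> (t + u) mod 4 \<in> shift_set r"
proof -
  have "int r * ((t + u) mod 4) mod 4 = (int r * t mod 4 + int r * u mod 4) mod 4"
    by (metis distrib_left mod_add_eq mod_mult_right_eq)
  then show "t \<in> shift_set r \<Longrightarrow> u \<in> shift_set r \<Longrightarrow> ?thesis" by (simp add: shift_set_def)
qed

lemma shift_set_mult: "t \<in> shift_set r \<Longrightarrow> (k * t) mod 4 \<in> shift_set r"
proof -
  have "int r * ((k * t) mod 4) mod 4 = k * (int r * t mod 4) mod 4"
    by (metis mod_mult_right_eq mult.left_commute)
  then show "t \<in> shift_set r \<Longrightarrow> ?thesis" by (simp add: shift_set_def)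
qed

lemma shift_set_1: "shift_set 1 = {0}"
  and shift_set_2: "shift_set 2 = {0, 2}"
  and shift_set_4: "shift_set 4 = {0..3}"
  by (auto simp: shift_set_def)

lemma dvd_4_cases:
  fixes r :: nat
  assumes "r dvd 4"
  obtains "r = 1" | "r = 2" | "r = 4"
proof -
  have "r \<le> 4" using dvd_imp_le[OF assms] by simp
  moreover have "r \<noteq> 0" using assms by (metis dvd_0_left_iff zero_neq_numeral)
  moreover have "r \<noteq> 3" using assms by auto
  ultimately show ?thesis using that by linarith
qed

lemma card_shift_set: "r dvd 4 \<Longrightarrow> card (shift_set r) = r"
  by (erule dvd_4_cases) (simp_all only: shift_set_1 shift_set_2 shift_set_4, simp_all)

definition shift_stack :: "nat \<Rightarrow> nat \<Rightarrow> int \<Rightarrow> int list \<Rightarrow> int list" where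
  "shift_stack r n t c = map (\<lambda>p. (c ! (p mod n) + int (p div n) * t) mod 4) [0..<r * n]"

definition shift_stack_code :: "nat \<Rightarrow> nat \<Rightarrow> int list set \<Rightarrow> int list set" where
  "shift_stack_code r n C = (\<lambda>(c, t). shift_stack r n t c) ` (C \<times> shift_set r)"

lemma length_shift_stack [simp]: "length (shift_stack r n t c) = r * n"
  by (simp add: shift_stack_def)

lemma nth_shift_stack:
  "p < r * n \<Longrightarrow> shift_stack r n t c ! p = (c ! (p mod n) + int (p div n) * t) mod 4"
  by (simp add: shift_stack_def)

lemma nth_shift_stack_block:
  "j < r \<Longrightarrow> i < n \<Longrightarrow> shift_stack r n t c ! (j * n + i) = (c ! i + int j * t) mod 4"
  by (simp add: nth_shift_stack index_less_mult)

lemma shift_stack_in_zvecs: "shift_stack r n t c \<in> z4vecs (r * n)"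
  by (auto simp: zvecs_def shift_stack_def)

lemma shift_stack_in_code: "c \<in> C \<Longrightarrow> t \<in> shift_set r \<Longrightarrow> shift_stack r n t c \<in> shift_stack_code r n C"
  unfolding shift_stack_code_def by (rule image_eqI[where x = "(c, t)"]) auto

lemma shift_stack_codeE:
  assumes "x \<in> shift_stack_code r n C"
  obtains c t where "x = shift_stack r n t c" "c \<in> C" "t \<in> shift_set r"
  using assms unfolding shift_stack_code_def by auto

lemma shift_stack_code_subset: "shift_stack_code r n C \<subseteq> z4vecs (r * n)"
  by (auto elim!: shift_stack_codeE simp: shift_stack_in_zvecs)

lemma shift_stack_zero: "shift_stack r n 0 (replicate n 0) = replicate (r * n) 0"
  by (rule nth_equalityI) (simp_all add: nth_shift_stack mod_less_of_less_mult)

lemma vadd_shift_stack: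
  assumes "length c = n" "length d = n"
  shows "vadd 4 (shift_stack r n t c) (shift_stack r n u d) =
    shift_stack r n ((t + u) mod 4) (vadd 4 c d)" (is "?l = ?r")
proof (rule nth_equalityI)
  fix p assume "p < length ?l"
  then have p: "p < r * n" by simp
  then show "?l ! p = ?r ! p"
    using assms mod_less_of_less_mult[OF p]
    by (simp add: nth_vadd nth_shift_stack mod_add_eq mod_add_left_eq mod_add_right_eq
        mod_add_mult_mod, simp add: algebra_simps)
qed simp

lemma vsmult_shift_stack:
  assumes "length c = n"
  shows "vsmult 4 k (shift_stack r n t c) = shift_stack r n ((k * t) mod 4) (vsmult 4 k c)"
    (is "?l = ?r")
proof (rule nth_equalityI)
  fix p assume "p < length ?l"
  then have p: "p < r * n" by simp
  then show "?l ! p = ?r ! p"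
    using assms mod_less_of_less_mult[OF p]
    by (simp add: nth_vsmult nth_shift_stack mod_simps mod_add_mult_mod algebra_simps)
qed simp

lemma z4_linear_code_shift_stack_code:
  assumes "z4_linear_code n C"
  shows "z4_linear_code (r * n) (shift_stack_code r n C)"
proof -
  have C: "C \<subseteq> z4vecs n" "replicate n 0 \<in> C"
    "\<And>x y. x \<in> C \<Longrightarrow> y \<in> C \<Longrightarrow> vadd 4 x y \<in> C"
    "\<And>k x. k \<in> {0..3} \<Longrightarrow> x \<in> C \<Longrightarrow> vsmult 4 k x \<in> C"
    using assms unfolding z4_linear_code_def by auto
  have "vadd 4 x y \<in> shift_stack_code r n C"
    if x: "x \<in> shift_stack_code r n C" and y: "y \<in> shift_stack_code r n C" for x y
  proof -
    obtain c t where "x = shift_stack r n t c" "c \<in> C" "t \<in> shift_set r"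
      using x by (elim shift_stack_codeE)
    moreover obtain d u where "y = shift_stack r n u d" "d \<in> C" "u \<in> shift_set r"
      using y by (elim shift_stack_codeE)
    moreover have "length c = n" "length d = n" using \<open>c \<in> C\<close> \<open>d \<in> C\<close> C(1) length_zvecs by auto
    ultimately show ?thesis
      using C(3) by (simp add: vadd_shift_stack shift_stack_in_code shift_set_add)
  qed
  moreover have "vsmult 4 k x \<in> shift_stack_code r n C"
    if k: "k \<in> {0..3}" and x: "x \<in> shift_stack_code r n C" for k x
  proof -
    obtain c t where "x = shift_stack r n t c" "c \<in> C" "t \<in> shift_set r"
      using x by (elim shift_stack_codeE)
    moreover have "length c = n" using \<open>c \<in> C\<close> C(1) length_zvecs by auto
    ultimately show ?thesis
      using C(4) k by (simp add: vsmult_shift_stack shift_stack_in_code shift_set_mult)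
  qed
  moreover have "replicate (r * n) 0 \<in> shift_stack_code r n C"
    using shift_stack_in_code[where r = r and n = n, OF C(2) zero_in_shift_set]
    by (simp add: shift_stack_zero)
  ultimately show ?thesis
    unfolding z4_linear_code_def by (auto simp: shift_stack_code_def shift_stack_in_zvecs)
qed

lemma inj_on_shift_stack:
  assumes "r dvd 4" "0 < n" "C \<subseteq> z4vecs n"
  shows "inj_on (\<lambda>(c, t). shift_stack r n t c) (C \<times> shift_set r)"
proof (rule inj_onI, clarify)
  fix c t d u
  assume c: "c \<in> C" "t \<in> shift_set r" and d: "d \<in> C" "u \<in> shift_set r"
    and eq: "shift_stack r n t c = shift_stack r n u d"
  have "0 < r" using assms(1) by (auto elim: dvd_4_cases)
  have "c ! i = d ! i" if "i < n" for i
  proof -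
    have "shift_stack r n t c ! (0 * n + i) = shift_stack r n u d ! (0 * n + i)" using eq by simp
    then have "c ! i mod 4 = d ! i mod 4"
      using \<open>0 < r\<close> that by (simp only: nth_shift_stack_block) simp
    moreover have "c ! i \<in> {0..3}" "d ! i \<in> {0..3}"
      using nth_zvecs[of c 4 n i] nth_zvecs[of d 4 n i] c d assms(3) that by auto
    ultimately show ?thesis by simp
  qed
  moreover have "length c = n" "length d = n" using c d assms(3) length_zvecs by auto
  ultimately have "c = d" by (simp add: list_eq_iff_nth_eq)
  moreover have "t = u"
  proof (cases "r = 1")
    case True
    then show ?thesis using c d shift_set_1 by simp
  next
    case False
    then have "1 < r" using \<open>0 < r\<close> by simp
    have "shift_stack r n t c ! (1 * n + 0) = shift_stack r n u d ! (1 * n + 0)" using eq by simp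
    then have "(c ! 0 + t) mod 4 = (c ! 0 + u) mod 4"
      using \<open>1 < r\<close> assms(2) \<open>c = d\<close> by (simp only: nth_shift_stack_block) simp
    then have "4 dvd t - u" by (simp add: mod_eq_dvd_iff)
    moreover have "t \<in> {0..3}" "u \<in> {0..3}" using c(2) d(2) shift_set_subset by blast+
    ultimately show ?thesis by auto presburger
  qed
  ultimately show "c = d \<and> t = u" by simp
qed

lemma card_shift_stack_code:
  assumes "r dvd 4" "0 < n" "C \<subseteq> z4vecs n"
  shows "card (shift_stack_code r n C) = r * card C"
  unfolding shift_stack_code_def
  using assms by (simp add: card_image inj_on_shift_stack card_cartesian_product card_shift_set)

lemma sum_lee_translates:
  assumes "r dvd 4" "t \<in> shift_set r" "x \<in> {0..3}"
  shows "(\<Sum>j<r. lee (x + int j * t)) = (if t = 0 then r * lee x else r)"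
proof -
  have x: "x \<in> {0, 1, 2, 3}" using assms(3) by auto
  from assms(1) show ?thesis
  proof (cases rule: dvd_4_cases)
    case 1
    then show ?thesis using assms(2) shift_set_1 by simp
  next
    case 2
    then have "t \<in> {0, 2}" using assms(2) shift_set_2 by simp
    moreover have "(\<Sum>j<2. lee (x + int j * t)) = lee x + lee (x + t)"
      by (simp add: eval_nat_numeral)
    ultimately show ?thesis using x 2 by (elim insertE emptyE) (simp_all add: lee_def)
  next
    case 3
    then have "t \<in> {0, 1, 2, 3}" using assms(2) shift_set_4 by auto
    moreover have "(\<Sum>j<4. lee (x + int j * t)) =
        lee x + lee (x + t) + lee (x + 2 * t) + lee (x + 3 * t)"
      by (simp add: eval_nat_numeral)
    ultimately show ?thesis using x 3 by (elim insertE emptyE) (simp_all add: lee_def)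
  qed
qed

lemma lee_wt_shift_stack:
  assumes "r dvd 4" "t \<in> shift_set r" "c \<in> z4vecs n"
  shows "lee_wt (shift_stack r n t c) = (if t = 0 then r * lee_wt c else r * n)"
proof -
  have "lee_wt (shift_stack r n t c) = (\<Sum>j<r. \<Sum>i<n. lee (shift_stack r n t c ! (j * n + i)))"
    by (simp add: lee_wt_conv_sum sum_lessThan_mult)
  also have "\<dots> = (\<Sum>j<r. \<Sum>i<n. lee (c ! i + int j * t))"
    by (intro sum.cong refl) (simp add: nth_shift_stack_block)
  also have "\<dots> = (\<Sum>i<n. \<Sum>j<r. lee (c ! i + int j * t))"
    by (rule sum.swap)
  also have "\<dots> = (\<Sum>i<n. if t = 0 then r * lee (c ! i) else r)"
    using nth_zvecs[OF assms(3)] by (intro sum.cong refl sum_lee_translates[OF assms(1,2)]) simp_all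
  also have "\<dots> = (if t = 0 then r * lee_wt c else r * n)"
    using length_zvecs[OF assms(3)] by (simp add: lee_wt_conv_sum sum_distrib_left)
  finally show ?thesis .
qed

lemma lee_weights_shift_stack_code:
  assumes "r dvd 4" "C \<subseteq> z4vecs n" "lee_weights n C = {m, n}"
  shows "lee_weights (r * n) (shift_stack_code r n C) = {r * m, r * n}"
proof -
  have "0 < r" using assms(1) by (auto elim: dvd_4_cases)
  have W: "lee_wt ` C - {0} = {m, n}" using lee_weights_eq[OF assms(2)] assms(3) by simp
  have wt: "lee_wt (shift_stack r n t c) = (if t = 0 then r * lee_wt c else r * n)"
    if "c \<in> C" "t \<in> shift_set r" for c t
    using lee_wt_shift_stack[OF assms(1) that(2)] that(1) assms(2) by blast
  have in_W: "lee_wt x \<in> {r * m, r * n}" if x: "x \<in> shift_stack_code r n C" "lee_wt x \<noteq> 0" for x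
  proof -
    obtain c t where c: "x = shift_stack r n t c" "c \<in> C" "t \<in> shift_set r"
      using x(1) by (elim shift_stack_codeE)
    show ?thesis
    proof (cases "t = 0")
      case True
      then have "lee_wt x = r * lee_wt c" using wt c by simp
      then have "lee_wt c \<in> lee_wt ` C - {0}" using x(2) c(2) by simp
      then show ?thesis using W \<open>lee_wt x = r * lee_wt c\<close> by auto
    next
      case False
      then show ?thesis using wt c by simp
    qed
  qed
  have in_image: "r * w \<in> lee_wt ` shift_stack_code r n C - {0}" if "w \<in> {m, n}" for w
  proof -
    have "w \<in> lee_wt ` C - {0}" using W that by simp
    then obtain c where c: "c \<in> C" "w = lee_wt c" "w \<noteq> 0" by blast
    have "shift_stack r n 0 c \<in> shift_stack_code r n C"
      using c(1) by (simp add: shift_stack_in_code)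
    then have "lee_wt (shift_stack r n 0 c) \<in> lee_wt ` shift_stack_code r n C" by (rule imageI)
    moreover have "lee_wt (shift_stack r n 0 c) = r * w" using wt c by simp
    ultimately show ?thesis using \<open>0 < r\<close> c(3) by simp
  qed
  have "lee_wt ` shift_stack_code r n C - {0} = {r * m, r * n}"
  proof (intro equalityI subsetI)
    fix y assume "y \<in> lee_wt ` shift_stack_code r n C - {0}"
    then obtain x where "x \<in> shift_stack_code r n C" "y = lee_wt x" "y \<noteq> 0" by auto
    then show "y \<in> {r * m, r * n}" using in_W by simp
  next
    fix y assume "y \<in> {r * m, r * n}"
    then show "y \<in> lee_wt ` shift_stack_code r n C - {0}"
      using in_image[of m] in_image[of n] by (elim insertE) simp_all
  qed
  then show ?thesis using lee_weights_eq[OF shift_stack_code_subset] by simp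
qed

lemma A_w_shift_stack_code:
  assumes "r dvd 4" "0 < n" "C \<subseteq> z4vecs n" "m \<noteq> n"
  shows "A_w (r * m) (shift_stack_code r n C) = A_w m C"
proof -
  have "0 < r" using assms(1) by (auto elim: dvd_4_cases)
  let ?f = "\<lambda>c. shift_stack r n 0 c"
  have "{x \<in> shift_stack_code r n C. lee_wt x = r * m} = ?f ` {c \<in> C. lee_wt c = m}"
  proof (intro equalityI subsetI)
    fix x assume "x \<in> {x \<in> shift_stack_code r n C. lee_wt x = r * m}"
    then obtain c t where x: "x = shift_stack r n t c" "c \<in> C" "t \<in> shift_set r" "lee_wt x = r * m"
      by (auto elim: shift_stack_codeE)
    then have "lee_wt x = (if t = 0 then r * lee_wt c else r * n)"
      using lee_wt_shift_stack[OF assms(1)] assms(3) by blast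
    then have "t = 0" "lee_wt c = m" using x(4) \<open>0 < r\<close> assms(4) by (simp_all split: if_splits)
    then show "x \<in> ?f ` {c \<in> C. lee_wt c = m}" using x(1,2) by simp
  next
    fix x assume "x \<in> ?f ` {c \<in> C. lee_wt c = m}"
    then obtain c where c: "x = ?f c" "c \<in> C" "lee_wt c = m" by blast
    then have "lee_wt x = r * m"
      using lee_wt_shift_stack[OF assms(1) zero_in_shift_set] assms(3) by auto
    then show "x \<in> {x \<in> shift_stack_code r n C. lee_wt x = r * m}"
      using c by (simp add: shift_stack_in_code)
  qed
  moreover have "inj_on ?f C"
  proof (rule inj_onI)
    fix c d assume "c \<in> C" "d \<in> C" "?f c = ?f d"
    then show "c = d"
      using inj_onD[OF inj_on_shift_stack[OF assms(1-3)], of "(c, 0)" "(d, 0)"] by simp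
  qed
  ultimately show ?thesis
    unfolding A_w_def by (simp add: card_image inj_on_subset)
qed

section \<open>Projectivity\<close>

definition block_sum :: "nat \<Rightarrow> nat \<Rightarrow> int list \<Rightarrow> int list" where
  "block_sum r n y = map (\<lambda>i. (\<Sum>j<r. y ! (j * n + i)) mod 4) [0..<n]"

lemma block_sum_in_zvecs: "block_sum r n y \<in> z4vecs n"
  by (auto simp: block_sum_def zvecs_def)

lemma lee_wt_block_sum_le:
  assumes "length y = r * n"
  shows "lee_wt (block_sum r n y) \<le> lee_wt y"
proof -
  have "lee_wt (block_sum r n y) = (\<Sum>i<n. lee (\<Sum>j<r. y ! (j * n + i)))"
    by (simp add: lee_wt_conv_sum block_sum_def)
  also have "\<dots> \<le> (\<Sum>i<n. \<Sum>j<r. lee (y ! (j * n + i)))"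
    by (intro sum_mono lee_sum_le)
  also have "\<dots> = lee_wt y"
    using assms by (simp add: lee_wt_conv_sum sum_lessThan_mult sum.swap[of _ "{..<n}"])
  finally show ?thesis .
qed

lemma dot4_shift_stack_zero_shift:
  assumes "length c = n" "length y = r * n"
  shows "dot4 (shift_stack r n 0 c) y = dot4 c (block_sum r n y)"
proof -
  have "dot4 (shift_stack r n 0 c) y = (\<Sum>j<r. \<Sum>i<n. c ! i mod 4 * y ! (j * n + i)) mod 4"
    using assms(2) by (simp add: dot4_conv_sum sum_lessThan_mult nth_shift_stack_block)
  also have "\<dots> = (\<Sum>i<n. \<Sum>j<r. c ! i * y ! (j * n + i)) mod 4"
    by (subst sum.swap) (intro mod_sum_cong, simp add: mod_mult_left_eq)
  also have "\<dots> = (\<Sum>i<n. c ! i * ((\<Sum>j<r. y ! (j * n + i)) mod 4)) mod 4"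
    by (intro mod_sum_cong) (simp add: sum_distrib_left mod_mult_right_eq)
  also have "\<dots> = dot4 c (block_sum r n y)"
    using assms(1) by (simp add: dot4_conv_sum block_sum_def)
  finally show ?thesis .
qed

lemma dot4_shift_stack_zero_word:
  assumes "length y = r * n"
  shows "dot4 (shift_stack r n t (replicate n 0)) y = (\<Sum>p<r * n. int (p div n) * t * y ! p) mod 4"
  using assms
  by (simp add: dot4_conv_sum nth_shift_stack mod_less_of_less_mult)
     (intro mod_sum_cong, simp add: mod_mult_left_eq)

lemma block_sum_in_dual_code:
  assumes "C \<subseteq> z4vecs n" "y \<in> dual_code (r * n) (shift_stack_code r n C)"
  shows "block_sum r n y \<in> dual_code n C"
proof -
  have "length y = r * n" using assms(2) unfolding dual_code_def by (blast dest: length_zvecs)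
  have "dot4 c (block_sum r n y) = 0" if "c \<in> C" for c
  proof -
    have "shift_stack r n 0 c \<in> shift_stack_code r n C"
      using that by (simp add: shift_stack_in_code)
    then have "dot4 (shift_stack r n 0 c) y = 0" using assms(2) by (simp add: dual_code_def)
    moreover have "length c = n" using that assms(1) length_zvecs by blast
    ultimately show ?thesis using \<open>length y = r * n\<close> by (simp add: dot4_shift_stack_zero_shift)
  qed
  then show ?thesis by (simp add: dual_code_def block_sum_in_zvecs)
qed

lemma lee_wt_le_2_two_cells:
  assumes "xs \<in> z4vecs N" "lee_wt xs \<le> 2" "p < N" "q < N" "p \<noteq> q" "xs ! p \<noteq> 0" "xs ! q \<noteq> 0"
  shows "xs ! p \<in> {1, 3}" and "\<forall>s<N. s \<noteq> p \<longrightarrow> s \<noteq> q \<longrightarrow> xs ! s = 0"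
proof -
  have entry: "xs ! s \<in> {0..3}" if "s < N" for s using nth_zvecs[OF assms(1) that] by simp
  have nonzero: "1 \<le> lee (xs ! s)" if "s < N" "xs ! s \<noteq> 0" for s
    using lee_eq_0_iff[OF entry[OF that(1)]] that(2) by simp
  have "lee_wt xs = (\<Sum>s\<in>{..<N} - {p, q}. lee (xs ! s)) + (\<Sum>s\<in>{p, q}. lee (xs ! s))"
    using assms(1,3,4) by (simp add: lee_wt_conv_sum length_zvecs sum.subset_diff)
  also have "(\<Sum>s\<in>{p, q}. lee (xs ! s)) = lee (xs ! p) + lee (xs ! q)"
    using assms(5) by simp
  finally have "lee (xs ! p) = 1" and rest: "(\<Sum>s\<in>{..<N} - {p, q}. lee (xs ! s)) = 0"
    using assms(2) nonzero[OF assms(3,6)] nonzero[OF assms(4,7)] by linarith+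
  then show "xs ! p \<in> {1, 3}" using lee_eq_1_iff[OF entry[OF assms(3)]] by simp
  show "\<forall>s<N. s \<noteq> p \<longrightarrow> s \<noteq> q \<longrightarrow> xs ! s = 0"
    using rest lee_eq_0_iff[OF entry] by simp
qed

lemma block_sum_zero_two_cells:
  assumes "y \<in> z4vecs (r * n)" "y \<noteq> replicate (r * n) 0" "lee_wt y \<le> 2"
    and "block_sum r n y = replicate n 0"
  obtains j0 j1 i where "j0 < r" "j1 < r" "j0 \<noteq> j1" "i < n"
    "y ! (j0 * n + i) \<in> {1, 3}" "(y ! (j0 * n + i) + y ! (j1 * n + i)) mod 4 = 0"
    "\<forall>s<r * n. s \<noteq> j0 * n + i \<longrightarrow> s \<noteq> j1 * n + i \<longrightarrow> y ! s = 0"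
proof -
  have len: "length y = r * n" using assms(1) by (rule length_zvecs)
  have column: "(\<Sum>j<r. y ! (j * n + i)) mod 4 = 0" if "i < n" for i
    using arg_cong[OF assms(4), of "\<lambda>xs. xs ! i"] that by (simp add: block_sum_def)
  obtain p where p: "p < r * n" "y ! p \<noteq> 0"
    using assms(2) len by (auto simp: list_eq_iff_nth_eq)
  define i j0 where "i = p mod n" and "j0 = p div n"
  have "i < n" "j0 < r" "p = j0 * n + i"
    using p(1) by (auto simp: i_def j0_def mod_less_of_less_mult less_mult_imp_div_less)
  have "\<exists>j1<r. j1 \<noteq> j0 \<and> y ! (j1 * n + i) \<noteq> 0"
  proof (rule ccontr)
    assume "\<not> ?thesis"
    then have "(\<Sum>j<r. y ! (j * n + i)) = y ! p"
      using \<open>j0 < r\<close> \<open>p = j0 * n + i\<close> by (simp add: sum.remove[of _ j0]) (intro sum.neutral, auto)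
    moreover have "y ! p \<in> {1..3}" using nth_zvecs[OF assms(1) p(1)] p(2) by auto
    ultimately show False using column[OF \<open>i < n\<close>] by simp
  qed
  then obtain j1 where j1: "j1 < r" "j1 \<noteq> j0" "y ! (j1 * n + i) \<noteq> 0" by blast
  have "j1 * n + i \<noteq> p" using j1(2) \<open>p = j0 * n + i\<close> \<open>i < n\<close> by simp
  note cells = lee_wt_le_2_two_cells[OF assms(1,3) p(1) index_less_mult[OF j1(1) \<open>i < n\<close>]
      this[symmetric] p(2) j1(3)]
  have "(\<Sum>j<r. y ! (j * n + i)) = (\<Sum>j\<in>{j0, j1}. y ! (j * n + i))"
    using cells(2) \<open>p = j0 * n + i\<close> \<open>j0 < r\<close> j1(1) \<open>i < n\<close>
    by (intro sum.mono_neutral_right) (auto simp: index_less_mult)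
  then have "(y ! p + y ! (j1 * n + i)) mod 4 = 0"
    using column[OF \<open>i < n\<close>] j1(2) \<open>p = j0 * n + i\<close> by simp
  then show ?thesis
    using that \<open>j0 < r\<close> j1(1,2) \<open>i < n\<close> cells \<open>p = j0 * n + i\<close> by simp
qed

lemma generator_in_shift_set: "r dvd 4 \<Longrightarrow> int (4 div r) mod 4 \<in> shift_set r"
  by (erule dvd_4_cases) (simp_all add: shift_set_2 shift_set_4)

lemma generator_separates_blocks:
  assumes "r dvd 4" "j0 < r" "j1 < r" "j0 \<noteq> j1" "odd u"
  shows "\<not> 4 dvd (int j0 - int j1) * (int (4 div r) mod 4) * u"
  using assms(1)
proof (cases rule: dvd_4_cases)
  case 1
  then show ?thesis using assms(2-4) by simp
next
  case 2
  then have "int j0 - int j1 \<in> {-1, 1}" using assms(2-4) by auto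
  then show ?thesis using 2 assms(5) by (elim insertE emptyE) (simp_all, presburger+)
next
  case 3
  then have "int j0 - int j1 \<in> {-3, -2, -1, 1, 2, 3}" using assms(2-4) by auto
  then show ?thesis using 3 assms(5) by (elim insertE emptyE) (simp_all, presburger+)
qed

lemma dot4_generator_two_cells:
  assumes "r dvd 4" "length y = r * n" "j0 < r" "j1 < r" "j0 \<noteq> j1" "i < n"
    and "y ! (j0 * n + i) \<in> {1, 3}" "(y ! (j0 * n + i) + y ! (j1 * n + i)) mod 4 = 0"
    and "\<forall>s<r * n. s \<noteq> j0 * n + i \<longrightarrow> s \<noteq> j1 * n + i \<longrightarrow> y ! s = 0"
  shows "dot4 (shift_stack r n (int (4 div r) mod 4) (replicate n 0)) y \<noteq> 0"
proof
  define t u v where "t = int (4 div r) mod 4" and "u = y ! (j0 * n + i)" and "v = y ! (j1 * n + i)"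
  assume "dot4 (shift_stack r n (int (4 div r) mod 4) (replicate n 0)) y = 0"
  moreover have "(\<Sum>p<r * n. int (p div n) * t * y ! p) =
      (\<Sum>p\<in>{j0 * n + i, j1 * n + i}. int (p div n) * t * y ! p)"
    using assms(3,4,6,9) by (intro sum.mono_neutral_right) (auto simp: index_less_mult)
  ultimately have "4 dvd int j0 * t * u + int j1 * t * v"
    using assms(2,5,6) by (simp add: dot4_shift_stack_zero_word t_def u_def v_def mod_eq_0_iff_dvd)
  moreover have "4 dvd int j1 * t * (u + v)"
    using assms(8) by (simp add: u_def v_def mod_eq_0_iff_dvd)
  ultimately have "4 dvd (int j0 * t * u + int j1 * t * v) - int j1 * t * (u + v)"
    by (rule dvd_diff)
  also have "(int j0 * t * u + int j1 * t * v) - int j1 * t * (u + v) = (int j0 - int j1) * t * u"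
    by (simp add: algebra_simps)
  finally have "4 dvd (int j0 - int j1) * t * u" .
  moreover have "odd u" using assms(7) by (auto simp: u_def)
  ultimately show False using generator_separates_blocks[OF assms(1,3-5)] by (simp add: t_def)
qed

lemma projective_shift_stack_code:
  assumes "r dvd 4" "z4_linear_code n C" "projective n C"
  shows "projective (r * n) (shift_stack_code r n C)"
  unfolding projective_def
proof (intro ballI impI)
  fix y assume y: "y \<in> dual_code (r * n) (shift_stack_code r n C)" "y \<noteq> replicate (r * n) 0"
  have C: "C \<subseteq> z4vecs n" "replicate n 0 \<in> C" using assms(2) by (auto simp: z4_linear_code_def)
  have "y \<in> z4vecs (r * n)" using y(1) by (simp add: dual_code_def)
  show "3 \<le> lee_wt y"
  proof (rule ccontr)
    assume "\<not> 3 \<le> lee_wt y"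
    then have light: "lee_wt y \<le> 2" by simp
    have "block_sum r n y \<in> dual_code n C" using block_sum_in_dual_code[OF C(1) y(1)] .
    moreover have "lee_wt (block_sum r n y) \<le> 2"
      using lee_wt_block_sum_le[OF length_zvecs[OF \<open>y \<in> z4vecs (r * n)\<close>]] light by simp
    ultimately have "block_sum r n y = replicate n 0"
      using assms(3) unfolding projective_def by force
    then obtain j0 j1 i where cells: "j0 < r" "j1 < r" "j0 \<noteq> j1" "i < n"
      "y ! (j0 * n + i) \<in> {1, 3}" "(y ! (j0 * n + i) + y ! (j1 * n + i)) mod 4 = 0"
      "\<forall>s<r * n. s \<noteq> j0 * n + i \<longrightarrow> s \<noteq> j1 * n + i \<longrightarrow> y ! s = 0"
      using block_sum_zero_two_cells[OF \<open>y \<in> z4vecs (r * n)\<close> y(2) light] by blast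
    have "dot4 (shift_stack r n (int (4 div r) mod 4) (replicate n 0)) y \<noteq> 0"
      by (rule dot4_generator_two_cells[OF assms(1) length_zvecs[OF \<open>y \<in> z4vecs (r * n)\<close>] cells])
    moreover have "shift_stack r n (int (4 div r) mod 4) (replicate n 0) \<in> shift_stack_code r n C"
      using C(2) generator_in_shift_set[OF assms(1)] by (rule shift_stack_in_code)
    ultimately show False using y(1) by (simp add: dual_code_def)
  qed
qed

section \<open>The type of the stacked code\<close>

definition prod_vadd :: "int list \<times> int list \<Rightarrow> int list \<times> int list \<Rightarrow> int list \<times> int list" where
  "prod_vadd x y = (vadd 4 (fst x) (fst y), vadd 2 (snd x) (snd y))"

lemma code_type_iff:
  "code_type C k1 k2 \<longleftrightarrow>
    (\<exists>f. bij_betw f C (z4vecs k1 \<times> z2vecs k2) \<and>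
      (\<forall>x\<in>C. \<forall>y\<in>C. f (vadd 4 x y) = prod_vadd (f x) (f y)))"
  by (simp add: code_type_def prod_vadd_def)

lemma code_type_transfer:
  assumes g: "bij_betw g A D" and h: "bij_betw h A (z4vecs k1 \<times> z2vecs k2)"
    and add_closed: "\<And>a b. a \<in> A \<Longrightarrow> b \<in> A \<Longrightarrow> add a b \<in> A"
    and g_add: "\<And>a b. a \<in> A \<Longrightarrow> b \<in> A \<Longrightarrow> g (add a b) = vadd 4 (g a) (g b)"
    and h_add: "\<And>a b. a \<in> A \<Longrightarrow> b \<in> A \<Longrightarrow> h (add a b) = prod_vadd (h a) (h b)"
  shows "code_type D k1 k2"
  unfolding code_type_iff
proof (intro exI conjI ballI)
  let ?g' = "inv_into A g"
  show "bij_betw (h \<circ> ?g') D (z4vecs k1 \<times> z2vecs k2)"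
    using bij_betw_inv_into[OF g] h by (rule bij_betw_trans)
  fix x y assume "x \<in> D" "y \<in> D"
  then obtain a b where ab: "a \<in> A" "b \<in> A" "x = g a" "y = g b"
    using g by (auto simp: bij_betw_def)
  have "?g' (vadd 4 x y) = add a b"
    using ab g_add[OF ab(1,2), symmetric] add_closed[OF ab(1,2)] g
    by (simp add: bij_betw_def inv_into_f_f)
  moreover have "?g' x = a" "?g' y = b" using ab g by (simp_all add: bij_betw_def inv_into_f_f)
  ultimately show "(h \<circ> ?g') (vadd 4 x y) = prod_vadd ((h \<circ> ?g') x) ((h \<circ> ?g') y)"
    using h_add[OF ab(1,2)] by simp
qed

lemma code_type_shift_stack_code:
  assumes C: "z4_linear_code n C" "code_type C k1 k2" and "r dvd 4" "0 < n"
    and e: "bij_betw e ((z4vecs k1 \<times> z2vecs k2) \<times> shift_set r) (z4vecs k1' \<times> z2vecs k2')"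
    and e_add: "\<And>x y t u. x \<in> z4vecs k1 \<times> z2vecs k2 \<Longrightarrow> y \<in> z4vecs k1 \<times> z2vecs k2 \<Longrightarrow>
      t \<in> shift_set r \<Longrightarrow> u \<in> shift_set r \<Longrightarrow>
      e (prod_vadd x y, (t + u) mod 4) = prod_vadd (e (x, t)) (e (y, u))"
  shows "code_type (shift_stack_code r n C) k1' k2'"
proof -
  obtain f where f: "bij_betw f C (z4vecs k1 \<times> z2vecs k2)"
    and f_add: "\<And>x y. x \<in> C \<Longrightarrow> y \<in> C \<Longrightarrow> f (vadd 4 x y) = prod_vadd (f x) (f y)"
    using C(2) unfolding code_type_iff by blast
  have sub: "C \<subseteq> z4vecs n" and closed: "\<And>x y. x \<in> C \<Longrightarrow> y \<in> C \<Longrightarrow> vadd 4 x y \<in> C"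
    using C(1) by (auto simp: z4_linear_code_def)
  show ?thesis
  proof (rule code_type_transfer[where g = "\<lambda>(c, t). shift_stack r n t c"
        and h = "e \<circ> map_prod f id"
        and add = "\<lambda>(c, t) (d, u). (vadd 4 c d, (t + u) mod 4)"])
    show "bij_betw (\<lambda>(c, t). shift_stack r n t c) (C \<times> shift_set r) (shift_stack_code r n C)"
      unfolding bij_betw_def shift_stack_code_def
      using inj_on_shift_stack[OF assms(3,4) sub] by simp
    show "bij_betw (e \<circ> map_prod f id) (C \<times> shift_set r) (z4vecs k1' \<times> z2vecs k2')"
      using bij_betw_map_prod[OF f bij_betw_id] e by (rule bij_betw_trans)
  next
    fix a b assume "a \<in> C \<times> shift_set r" "b \<in> C \<times> shift_set r"
    then obtain c t d u where ab: "a = (c, t)" "b = (d, u)" "c \<in> C" "d \<in> C"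
      "t \<in> shift_set r" "u \<in> shift_set r"
      by auto
    then show "(\<lambda>(c, t) (d, u). (vadd 4 c d, (t + u) mod 4)) a b \<in> C \<times> shift_set r"
      using closed shift_set_add by simp
    have "length c = n" "length d = n" using ab(3,4) sub length_zvecs by blast+
    then show "(\<lambda>(c, t). shift_stack r n t c) ((\<lambda>(c, t) (d, u). (vadd 4 c d, (t + u) mod 4)) a b) =
        vadd 4 ((\<lambda>(c, t). shift_stack r n t c) a) ((\<lambda>(c, t). shift_stack r n t c) b)"
      using ab(1,2) by (simp add: vadd_shift_stack)
    show "(e \<circ> map_prod f id) ((\<lambda>(c, t) (d, u). (vadd 4 c d, (t + u) mod 4)) a b) =
        prod_vadd ((e \<circ> map_prod f id) a) ((e \<circ> map_prod f id) b)"
      using ab f_add e_add bij_betw_apply[OF f] by simp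
  qed
qed

lemma code_type_shift_stack_code_4:
  assumes "z4_linear_code n C" "code_type C k1 k2" "0 < n"
  shows "code_type (shift_stack_code 4 n C) (Suc k1) k2"
proof (rule code_type_shift_stack_code[OF assms(1,2) _ assms(3),
      where e = "\<lambda>((a, b), s). (a @ [s], b)"])
  show "bij_betw (\<lambda>((a, b), s). (a @ [s], b)) ((z4vecs k1 \<times> z2vecs k2) \<times> shift_set 4)
      (z4vecs (Suc k1) \<times> z2vecs k2)"
    by (rule bij_betw_byWitness[where f' = "\<lambda>(w, v). ((butlast w, v), last w)"])
      (auto simp: shift_set_4 zvecs_snoc_iff dest!: zvecs_SucD)
  fix x y t u assume "x \<in> z4vecs k1 \<times> z2vecs k2" "y \<in> z4vecs k1 \<times> z2vecs k2"
  then show "(\<lambda>((a, b), s). (a @ [s], b)) (prod_vadd x y, (t + u) mod 4) =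
      prod_vadd ((\<lambda>((a, b), s). (a @ [s], b)) (x, t)) ((\<lambda>((a, b), s). (a @ [s], b)) (y, u))"
    by (auto simp: prod_vadd_def vadd_snoc length_zvecs)
qed simp

lemma code_type_shift_stack_code_2:
  assumes "z4_linear_code n C" "code_type C k1 k2" "0 < n"
  shows "code_type (shift_stack_code 2 n C) k1 (Suc k2)"
proof (rule code_type_shift_stack_code[OF assms(1,2) _ assms(3),
      where e = "\<lambda>((a, b), s). (a, b @ [s div 2])"])
  show "bij_betw (\<lambda>((a, b), s). (a, b @ [s div 2])) ((z4vecs k1 \<times> z2vecs k2) \<times> shift_set 2)
      (z4vecs k1 \<times> z2vecs (Suc k2))"
    by (rule bij_betw_byWitness[where f' = "\<lambda>(u, w). ((u, butlast w), 2 * last w)"])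
      (auto simp: shift_set_2 zvecs_snoc_iff dest!: zvecs_SucD)
  fix x y t u assume "x \<in> z4vecs k1 \<times> z2vecs k2" "y \<in> z4vecs k1 \<times> z2vecs k2"
    and "t \<in> shift_set 2" "u \<in> shift_set 2"
  moreover have "(t + u) mod 4 div 2 = (t div 2 + u div 2) mod 2"
    using \<open>t \<in> shift_set 2\<close> \<open>u \<in> shift_set 2\<close> by (auto simp: shift_set_2)
  ultimately show "(\<lambda>((a, b), s). (a, b @ [s div 2])) (prod_vadd x y, (t + u) mod 4) =
      prod_vadd ((\<lambda>((a, b), s). (a, b @ [s div 2])) (x, t))
        ((\<lambda>((a, b), s). (a, b @ [s div 2])) (y, u))"
    by (auto simp: prod_vadd_def vadd_snoc length_zvecs)
qed simp

section \<open>Plotkin optimality and iteration\<close>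

lemma floor_plotkin_bound_eq_iff:
  assumes "2 \<le> M"
  shows "int N = \<lfloor>real M / (real M - 1) * real N\<rfloor> \<longleftrightarrow> N + 2 \<le> M"
proof -
  have M: "real M - 1 > 0" using assms by simp
  have "real M / (real M - 1) * real N = real N + real N / (real M - 1)"
    using M by (simp add: field_simps)
  then have "int N = \<lfloor>real M / (real M - 1) * real N\<rfloor> \<longleftrightarrow> real N / (real M - 1) < 1"
    using M by (simp add: floor_eq_iff eq_commute[of "int N"])
  also have "\<dots> \<longleftrightarrow> real N < real M - 1"
    using M by (simp add: divide_less_eq_1)
  also have "\<dots> \<longleftrightarrow> N + 2 \<le> M"
    by linarith
  finally show ?thesis .
qed

lemma plotkin_optimal_iff:
  assumes "2 \<le> card C" "min_lee_dist n C = n"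
  shows "plotkin_optimal n C \<longleftrightarrow> n + 2 \<le> card C"
  using floor_plotkin_bound_eq_iff[OF assms(1)] assms(2) by (simp add: plotkin_optimal_def)

definition optimal_two_weight_code :: "nat \<Rightarrow> nat \<Rightarrow> nat \<Rightarrow> nat \<Rightarrow> int list set \<Rightarrow> bool" where
  "optimal_two_weight_code n m k1 k2 C \<longleftrightarrow>
     z4_linear_code n C \<and> code_type C k1 k2 \<and> projective n C \<and>
     lee_weights n C = {m, n} \<and> 0 < n \<and> n < m \<and> n + 2 \<le> card C"

lemma optimal_two_weight_codeI:
  assumes "z4_linear_code n C" "code_type C k1 k2" "plotkin_optimal n C" "projective n C"
    and "min_lee_dist n C = n" "lee_weights n C = {m, n}" "m \<noteq> n"
  shows "optimal_two_weight_code n m k1 k2 C"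
proof -
  have C: "C \<subseteq> z4vecs n" "replicate n 0 \<in> C" using assms(1) by (auto simp: z4_linear_code_def)
  have W: "lee_wt ` C - {0} = {m, n}" using lee_weights_eq[OF C(1)] assms(6) by simp
  then have "n \<in> lee_wt ` C - {0}" by simp
  then obtain c where c: "c \<in> C" "lee_wt c = n" "n \<noteq> 0" by auto
  have "n < m" using assms(5-7) by (simp add: min_lee_dist_def)
  have "c \<noteq> replicate n 0"
  proof
    assume "c = replicate n 0"
    then show False using c(2,3) by simp
  qed
  then have "card {replicate n 0, c} \<le> card C"
    using C c(1) finite_subset[OF C(1) finite_zvecs] by (intro card_mono) auto
  then have "2 \<le> card C" using \<open>c \<noteq> replicate n 0\<close> by simp
  then show ?thesis
    using assms c(3) \<open>n < m\<close> plotkin_optimal_iff by (simp add: optimal_two_weight_code_def)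
qed

lemma optimal_two_weight_code_min_lee_dist:
  "optimal_two_weight_code n m k1 k2 C \<Longrightarrow> min_lee_dist n C = n"
  by (simp add: optimal_two_weight_code_def min_lee_dist_def)

lemma optimal_two_weight_code_plotkin_optimal:
  assumes "optimal_two_weight_code n m k1 k2 C"
  shows "plotkin_optimal n C"
proof -
  have "n + 2 \<le> card C" using assms by (simp add: optimal_two_weight_code_def)
  then show ?thesis
    using plotkin_optimal_iff optimal_two_weight_code_min_lee_dist[OF assms] by simp
qed

lemma card_eq_A_w_two_weights:
  assumes "C \<subseteq> z4vecs n" "replicate n 0 \<in> C" "lee_weights n C = {m, n}" "m \<noteq> n"
  shows "card C = A_w m C + A_w n C + 1"
proof -
  define A B where "A = {c \<in> C. lee_wt c = m}" and "B = {c \<in> C. lee_wt c = n}"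
  have W: "lee_wt ` C - {0} = {m, n}" using lee_weights_eq[OF assms(1)] assms(3) by simp
  then have "m \<in> lee_wt ` C - {0}" "n \<in> lee_wt ` C - {0}" by simp_all
  then have "m \<noteq> 0" "n \<noteq> 0" by simp_all
  have fin: "finite A" "finite B"
    using finite_subset[OF assms(1) finite_zvecs] by (simp_all add: A_def B_def)
  have "C = insert (replicate n 0) (A \<union> B)"
  proof (intro equalityI subsetI)
    fix c assume "c \<in> C"
    show "c \<in> insert (replicate n 0) (A \<union> B)"
    proof (cases "lee_wt c = 0")
      case True
      moreover have "c \<in> z4vecs n" using \<open>c \<in> C\<close> assms(1) by blast
      ultimately show ?thesis using lee_wt_eq_0_iff by simp
    next
      case False
      then have "lee_wt c \<in> lee_wt ` C - {0}" using \<open>c \<in> C\<close> by simp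
      then have "lee_wt c \<in> {m, n}" using W by simp
      then show ?thesis using \<open>c \<in> C\<close> by (auto simp: A_def B_def)
    qed
  qed (use assms(2) in \<open>auto simp: A_def B_def\<close>)
  moreover have "replicate n 0 \<notin> A \<union> B"
    using \<open>m \<noteq> 0\<close> \<open>n \<noteq> 0\<close> by (simp add: A_def B_def)
  moreover have "A \<inter> B = {}" using assms(4) by (auto simp: A_def B_def)
  ultimately have "card C = Suc (card A + card B)"
    using fin by (simp add: card_Un_disjoint)
  then show ?thesis by (simp add: A_w_def A_def B_def)
qed

lemma optimal_two_weight_code_A_w:
  assumes "optimal_two_weight_code n m k1 k2 C"
  shows "int (A_w n C) = 4 ^ k1 * 2 ^ k2 - 1 - int (A_w m C)"
proof -
  have "int (card C) = int (A_w m C) + int (A_w n C) + 1"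
    using assms
    by (subst card_eq_A_w_two_weights) (auto simp: optimal_two_weight_code_def z4_linear_code_def)
  moreover have "code_type C k1 k2" using assms by (simp add: optimal_two_weight_code_def)
  then have "int (card C) = 4 ^ k1 * 2 ^ k2" by (simp add: code_type_card)
  ultimately show ?thesis by simp
qed

lemma optimal_two_weight_code_shift_stack_code:
  assumes "optimal_two_weight_code n m k1 k2 C" "r dvd 4"
    and "code_type (shift_stack_code r n C) k1' k2'"
  shows "optimal_two_weight_code (r * n) (r * m) k1' k2' (shift_stack_code r n C)"
    and "A_w (r * m) (shift_stack_code r n C) = A_w m C"
proof -
  have C: "z4_linear_code n C" "projective n C" "lee_weights n C = {m, n}" "0 < n" "n < m"
    "n + 2 \<le> card C"
    using assms(1) by (simp_all add: optimal_two_weight_code_def)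
  have sub: "C \<subseteq> z4vecs n" using C(1) by (simp add: z4_linear_code_def)
  have "0 < r" using assms(2) by (auto elim: dvd_4_cases)
  have "r * n + 2 \<le> r * (n + 2)" using \<open>0 < r\<close> by (cases r) simp_all
  also have "\<dots> \<le> r * card C" using C(6) by (rule mult_le_mono2)
  finally show "optimal_two_weight_code (r * n) (r * m) k1' k2' (shift_stack_code r n C)"
    using C \<open>0 < r\<close> assms(2,3) sub
    by (simp add: optimal_two_weight_code_def z4_linear_code_shift_stack_code
        projective_shift_stack_code lee_weights_shift_stack_code card_shift_stack_code)
  show "A_w (r * m) (shift_stack_code r n C) = A_w m C"
    using A_w_shift_stack_code[OF assms(2) C(4) sub] C(5) by simp
qed

lemma optimal_two_weight_code_iterate:
  assumes step: "\<And>n m k1 k2 C. optimal_two_weight_code n m k1 k2 C \<Longrightarrow>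
      \<exists>C'. optimal_two_weight_code (r * n) (r * m) (k1 + d1) (k2 + d2) C' \<and>
        A_w (r * m) C' = A_w m C"
    and "optimal_two_weight_code n m k1 k2 C"
  shows "\<exists>C'. optimal_two_weight_code (r ^ a * n) (r ^ a * m) (k1 + a * d1) (k2 + a * d2) C' \<and>
      A_w (r ^ a * m) C' = A_w m C"
proof (induction a)
  case 0
  show ?case using assms(2) by auto
next
  case (Suc a)
  then obtain C'
    where "optimal_two_weight_code (r ^ a * n) (r ^ a * m) (k1 + a * d1) (k2 + a * d2) C'"
    and "A_w (r ^ a * m) C' = A_w m C" by blast
  then show ?case using step by (fastforce simp: ac_simps)
qed

lemma optimal_two_weight_code_scale:
  assumes "optimal_two_weight_code n m k1 k2 C"
  shows "\<exists>C'. optimal_two_weight_code (4 ^ a * 2 ^ b * n) (4 ^ a * 2 ^ b * m) (k1 + a) (k2 + b) C' \<and>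
      A_w (4 ^ a * 2 ^ b * m) C' = A_w m C"
proof -
  have quadruple: "\<exists>C'. optimal_two_weight_code (4 * n) (4 * m) (k1 + 1) (k2 + 0) C' \<and>
      A_w (4 * m) C' = A_w m C"
    if "optimal_two_weight_code n m k1 k2 C" for n m k1 k2 C
    using that optimal_two_weight_code_shift_stack_code[OF that _ code_type_shift_stack_code_4]
    by (fastforce simp: optimal_two_weight_code_def)
  have double: "\<exists>C'. optimal_two_weight_code (2 * n) (2 * m) (k1 + 0) (k2 + 1) C' \<and>
      A_w (2 * m) C' = A_w m C"
    if "optimal_two_weight_code n m k1 k2 C" for n m k1 k2 C
    using that optimal_two_weight_code_shift_stack_code[OF that _ code_type_shift_stack_code_2]
    by (fastforce simp: optimal_two_weight_code_def)
  obtain C1 where C1: "optimal_two_weight_code (4 ^ a * n) (4 ^ a * m) (k1 + a) k2 C1"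
    and "A_w (4 ^ a * m) C1 = A_w m C"
    using optimal_two_weight_code_iterate[OF quadruple assms, of a] by auto
  moreover obtain C2
    where "optimal_two_weight_code (2 ^ b * (4 ^ a * n)) (2 ^ b * (4 ^ a * m)) (k1 + a) (k2 + b) C2"
    and "A_w (2 ^ b * (4 ^ a * m)) C2 = A_w (4 ^ a * m) C1"
    using optimal_two_weight_code_iterate[OF double C1, of b] by auto
  ultimately show ?thesis by (auto simp: ac_simps)
qed

theorem theorem5p4:
  fixes C :: "int list set" and k1 k2 n m a b :: nat
  assumes "z4_linear_code n C"
    and "code_type C k1 k2"
    and "plotkin_optimal n C"
    and "projective n C"
    and "min_lee_dist n C = n"
    and "lee_weights n C = {m, n}" and "m \<noteq> n"
    and "a + b > 0"
  shows "\<exists>C'. z4_linear_code (4^a * 2^b * n) C'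
    \<and> code_type C' (k1 + a) (k2 + b)
    \<and> plotkin_optimal (4^a * 2^b * n) C'
    \<and> projective (4^a * 2^b * n) C'
    \<and> min_lee_dist (4^a * 2^b * n) C' = 4^a * 2^b * n
    \<and> lee_weights (4^a * 2^b * n) C' = {4^a * 2^b * m, 4^a * 2^b * n}
    \<and> A_w (4^a * 2^b * m) C' = A_w m C
    \<and> int (A_w (4^a * 2^b * n) C') = 4^(k1 + a) * 2^(k2 + b) - 1 - int (A_w m C)"
proof -
  have "optimal_two_weight_code n m k1 k2 C" using assms(1-7) by (rule optimal_two_weight_codeI)
  then obtain C'
    where C': "optimal_two_weight_code (4^a * 2^b * n) (4^a * 2^b * m) (k1 + a) (k2 + b) C'"
    and "A_w (4^a * 2^b * m) C' = A_w m C"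
    using optimal_two_weight_code_scale by blast
  then show ?thesis
    using optimal_two_weight_code_min_lee_dist[OF C'] optimal_two_weight_code_plotkin_optimal[OF C']
      optimal_two_weight_code_A_w[OF C']
    unfolding optimal_two_weight_code_def by auto
qed

end
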